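(* For every integer $l\ge1$, let $\mathcal{I}_6(l)$ be the index coding instance on $[4l+1]$ with $A_{2i-1}=\{2j: j\in[2l]\setminus\{i\}\}\cup\{4l+1\}$ and $A_{2i}=\{2i-1\}$ for $i\in[2l]$, and $A_{4l+1}=\{2i-1: i\in[2l]\}$. Then the UMCD algorithm on $\mathcal{I}_6(l)$ outputs $\beta_{\text{UMCD}}(\mathcal{I}_6(l))=2l+1$.
   Context: Instance: side-information sets $A_i\subseteq[m]\setminus\{i\}$, $B_i=[m]\setminus(A_i\cup\{i\})$. For a $0/1$ matrix $\boldsymbol{G}$ with columns indexed by $[m]$, $\boldsymbol{G}_{[k]}^{L}$ is the submatrix of its first $k$ rows and columns $L$; $\mathrm{mcm}(\boldsymbol{G})$ is the maximum number of $1$-entries no two in a common row or column (0 if no columns). UMCD algorithm: $N=[m]$, $k=0$; while $N\ne\emptyset$: $k\leftarrow k+1$; pick $w\in N$ with $|A_w|$ minimal over $N$ (arbitrary tie-breaking); row $k$ of $\boldsymbol{G}$ is the indicator vector of $\{w\}\cup A_w$; remove $w$ from $N$; remove from $N$ every $i$ with $\mathrm{mcm}(\boldsymbol{G}_{[k]}^{\{i\}\cup B_i})=\mathrm{mcm}(\boldsymbol{G}_{[k]}^{B_i})+1$; output $\beta_{\text{UMCD}}=k$. *)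

theory Defs
  imports Main
begin

text \<open>A 0/1 matrix G with columns indexed by [m] is represented by the list of its rows;
  row r (0-based) is the set of columns c with entry 1.  A matching in the submatrix
  consisting of the first k rows and the columns in L is a set of 1-entries (r,c),
  no two in a common row or column.\<close>

definition matchings :: "nat set list \<Rightarrow> nat \<Rightarrow> nat set \<Rightarrow> (nat \<times> nat) set set" where
  "matchings G k L = {M. M \<subseteq> {(r, c). r < k \<and> r < length G \<and> c \<in> L \<and> c \<in> G ! r}
                          \<and> inj_on fst M \<and> inj_on snd M}"

definition mcm :: "nat set list \<Rightarrow> nat \<Rightarrow> nat set \<Rightarrow> nat" where
  "mcm G k L = Max (card ` matchings G k L)"

definition Bset :: "(nat \<Rightarrow> nat set) \<Rightarrow> nat \<Rightarrow> nat \<Rightarrow> nat set" where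
  "Bset A m i = {1..m} - (A i \<union> {i})"

text \<open>umcd_from A m N G k: starting from the state with remaining set N and current
  matrix G (k rows so far = length G), some run of the UMCD algorithm (with some
  admissible tie-breaking) terminates with output k.\<close>
inductive umcd_from :: "(nat \<Rightarrow> nat set) \<Rightarrow> nat \<Rightarrow> nat set \<Rightarrow> nat set list \<Rightarrow> nat \<Rightarrow> bool"
  for A :: "nat \<Rightarrow> nat set" and m :: nat where
  stop: "umcd_from A m {} G (length G)"
| step: "\<lbrakk> N \<noteq> {}; w \<in> N; \<forall>i\<in>N. card (A w) \<le> card (A i);
          G' = G @ [insert w (A w)];
          N' = (N - {w}) - {i \<in> N. mcm G' (length G') (insert i (Bset A m i))
                                     = mcm G' (length G') (Bset A m i) + 1};
          umcd_from A m N' G' k \<rbrakk> \<Longrightarrow> umcd_from A m N G k"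

definition umcd_output :: "(nat \<Rightarrow> nat set) \<Rightarrow> nat \<Rightarrow> nat \<Rightarrow> bool" where
  "umcd_output A m k = umcd_from A m {1..m} [] k"

definition I6 :: "nat \<Rightarrow> nat \<Rightarrow> nat set" where
  "I6 l v =
    (if v = 4*l+1 then {2*i - 1 | i. i \<in> {1..2*l}}
     else if odd v then {2*j | j. j \<in> {1..2*l} \<and> j \<noteq> (v + 1) div 2} \<union> {4*l+1}
     else {v - 1})"

end

theory Submission
  imports Defs "HOL-Library.Disjoint_Sets"
begin

(* Even vertices have |A_v| = 1 and all other vertices |A_v| = 2l, so UMCD first picks the even
   vertices 2j one at a time, appending the rows {2j-1, 2j}.  These rows are pairwise disjoint and
   each of them meets B_v for every vertex v not yet picked, so on the columns B_v the current
   matrix already has a matching through all of its rows, and nothing besides the picked vertex is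
   removed.  Once all 2l even vertices are picked, only the odd vertices remain, all with
   |A_v| = 2l.  After the row of any one of them is appended, every other odd v has |B_v| = 2l,
   while all 2l+1 rows can be matched into {v} \<union> B_v; so every vertex is removed and the run stops
   after 2l+1 rows, whatever the tie-breaking. *)

lemma card_matching_le_length:
  assumes "M \<in> matchings G k L"
  shows "card M \<le> length G"
proof -
  have "inj_on fst M" "fst ` M \<subseteq> {..<length G}"
    using assms by (auto simp: matchings_def)
  then have "card (fst ` M) \<le> length G"
    by (metis card_lessThan card_mono finite_lessThan)
  with \<open>inj_on fst M\<close> show ?thesis by (simp add: card_image)
qed

lemma finite_matching:
  assumes "M \<in> matchings G k L"
  shows "finite M"
proof -
  have "inj_on fst M" "fst ` M \<subseteq> {..<length G}"
    using assms by (auto simp: matchings_def)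
  then show ?thesis
    by (meson finite_imageD finite_lessThan finite_subset)
qed

lemma finite_card_matchings: "finite (card ` matchings G k L)"
proof (rule finite_subset)
  show "card ` matchings G k L \<subseteq> {..length G}"
    using card_matching_le_length by (intro image_subsetI) simp
qed simp

lemma card_le_mcm: "M \<in> matchings G k L \<Longrightarrow> card M \<le> mcm G k L"
  unfolding mcm_def by (simp add: finite_card_matchings)

lemma mcm_leI:
  assumes "\<And>M. M \<in> matchings G k L \<Longrightarrow> card M \<le> n"
  shows "mcm G k L \<le> n"
proof -
  have "{} \<in> matchings G k L" by (simp add: matchings_def)
  then show ?thesis
    unfolding mcm_def using assms finite_card_matchings by (subst Max_le_iff) auto
qed

lemma mcm_le_length: "mcm G k L \<le> length G"
  by (rule mcm_leI) (rule card_matching_le_length)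

lemma mcm_le_card:
  assumes "finite L"
  shows "mcm G k L \<le> card L"
proof (rule mcm_leI)
  fix M assume "M \<in> matchings G k L"
  then have "inj_on snd M" "snd ` M \<subseteq> L" by (auto simp: matchings_def)
  then show "card M \<le> card L"
    using assms by (metis card_image card_mono)
qed

lemma mcm_insert_le: "mcm G k (insert c L) \<le> mcm G k L + 1"
proof (rule mcm_leI)
  fix M assume M: "M \<in> matchings G k (insert c L)"
  define M' where "M' = {p \<in> M. snd p \<noteq> c}"
  have "M' \<in> matchings G k L"
    using M unfolding M'_def matchings_def by (auto intro: inj_on_subset)
  then have "card M' \<le> mcm G k L" by (rule card_le_mcm)
  have "inj_on snd (M - M')"
    using M unfolding matchings_def by (auto intro: inj_on_subset)
  moreover have "snd ` (M - M') \<subseteq> {c}" by (auto simp: M'_def)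
  ultimately have "card (M - M') \<le> 1"
    using card_mono[of "{c}" "snd ` (M - M')"] by (simp add: card_image)
  moreover have "card M \<le> card M' + card (M - M')"
    using card_Un_le[of M' "M - M'"] by (simp add: M'_def Un_absorb1)
  ultimately show "card M \<le> mcm G k L + 1"
    using \<open>card M' \<le> mcm G k L\<close> by linarith
qed

lemma mcm_attained: "\<exists>M \<in> matchings G k L. card M = mcm G k L"
proof -
  have "{} \<in> matchings G k L" by (simp add: matchings_def)
  then have "mcm G k L \<in> card ` matchings G k L"
    unfolding mcm_def using finite_card_matchings by (intro Max_in) auto
  then show ?thesis by (metis imageE)
qed

lemma mcm_snoc_ge:
  assumes "c \<in> R" "c \<in> L"
  shows "mcm G (length G) (L - {c}) + 1 \<le> mcm (G @ [R]) (length (G @ [R])) L"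
proof -
  obtain M where M: "M \<in> matchings G (length G) (L - {c})"
      "card M = mcm G (length G) (L - {c})"
    using mcm_attained by blast
  have row_old: "fst p < length G" "snd p \<noteq> c" if "p \<in> M" for p
    using M(1) that by (auto simp: matchings_def)
  have "insert (length G, c) M \<in> matchings (G @ [R]) (length (G @ [R])) L"
    using M(1) assms unfolding matchings_def
    by (auto simp: nth_append inj_on_def dest: row_old)
  then have "card (insert (length G, c) M) \<le> mcm (G @ [R]) (length (G @ [R])) L"
    by (rule card_le_mcm)
  moreover have "(length G, c) \<notin> M" using row_old by fastforce
  ultimately show ?thesis
    using M finite_matching by simp
qed

lemma mcm_map_disjoint_rows_ge:
  assumes "distinct xs" "disjoint_family_on row (set xs)" "\<forall>x \<in> set xs. row x \<inter> L \<noteq> {}"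
  shows "length xs \<le> mcm (map row xs) (length xs) L"
proof -
  define g where "g x = (SOME c. c \<in> row x \<inter> L)" for x
  have g: "g x \<in> row x \<inter> L" if "x \<in> set xs" for x
    unfolding g_def by (metis assms(3) that some_in_eq)
  define M where "M = (\<lambda>r. (r, g (xs ! r))) ` {..<length xs}"
  have "inj_on snd M"
  proof (rule inj_onI)
    fix p q assume "p \<in> M" "q \<in> M" "snd p = snd q"
    then obtain r s where rs: "r < length xs" "s < length xs"
        "p = (r, g (xs ! r))" "q = (s, g (xs ! s))"
      by (auto simp: M_def)
    then have "g (xs ! r) \<in> row (xs ! r) \<inter> row (xs ! s)"
      using g[OF nth_mem[OF rs(1)]] g[OF nth_mem[OF rs(2)]] \<open>snd p = snd q\<close> by auto
    then have "xs ! r = xs ! s"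
      using disjoint_family_onD[OF assms(2) nth_mem[OF rs(1)] nth_mem[OF rs(2)]] by blast
    then show "p = q" using rs assms(1) by (simp add: nth_eq_iff_index_eq)
  qed
  moreover have "inj_on fst M" by (auto simp: M_def inj_on_def)
  ultimately have "M \<in> matchings (map row xs) (length xs) L"
    unfolding matchings_def M_def using g by auto
  moreover have "card M = length xs" by (simp add: M_def card_image inj_on_def)
  ultimately show ?thesis by (metis card_le_mcm)
qed

definition decoded :: "(nat \<Rightarrow> nat set) \<Rightarrow> nat \<Rightarrow> nat set list \<Rightarrow> nat \<Rightarrow> bool" where
  "decoded A m G i \<longleftrightarrow>
     mcm G (length G) (insert i (Bset A m i)) = mcm G (length G) (Bset A m i) + 1"

lemma not_decoded_if_full_rank:
  "length G \<le> mcm G (length G) (Bset A m i) \<Longrightarrow> \<not> decoded A m G i"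
  using mcm_le_length[of G "length G" "insert i (Bset A m i)"] unfolding decoded_def by linarith

lemma decoded_if_exceeds_card:
  "card (Bset A m i) < mcm G (length G) (insert i (Bset A m i)) \<Longrightarrow> decoded A m G i"
  using mcm_le_card[of "Bset A m i" G "length G"] mcm_insert_le[of G "length G" i "Bset A m i"]
  unfolding decoded_def Bset_def by simp

lemma umcd_from_empty_iff: "umcd_from A m {} G k \<longleftrightarrow> k = length G"
  by (auto elim: umcd_from.cases intro: umcd_from.stop)

lemma umcd_from_nonempty_iff:
  assumes "N \<noteq> {}"
  shows "umcd_from A m N G k \<longleftrightarrow>
    (\<exists>w \<in> N. (\<forall>i \<in> N. card (A w) \<le> card (A i)) \<and>
      umcd_from A m (N - {w} - {i \<in> N. decoded A m (G @ [insert w (A w)]) i})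
        (G @ [insert w (A w)]) k)"
  using assms by (subst umcd_from.simps) (auto simp: decoded_def)

definition twins :: "nat \<Rightarrow> nat set" where
  "twins j = {2*j - 1, 2*j}"

lemma disjoint_family_twins_on: "disjoint_family_on twins S"
  unfolding disjoint_family_on_def twins_def by auto

lemma I6_even: "even v \<Longrightarrow> I6 l v = {v - 1}"
  unfolding I6_def by auto

lemma insert_I6_even: "insert (2*j) (I6 l (2*j)) = twins j"
  by (auto simp: I6_even twins_def)

lemma I6_odd:
  assumes "odd v" "v \<noteq> 4*l+1"
  shows "I6 l v = insert (4*l+1) {x \<in> {1..4*l}. even x \<and> x \<noteq> v + 1}"
proof -
  have "v + 1 = 2 * ((v + 1) div 2)" using assms(1) by simp
  then have "{2*j | j. j \<in> {1..2*l} \<and> j \<noteq> (v + 1) div 2} = {x \<in> {1..4*l}. even x \<and> x \<noteq> v + 1}"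
    by (auto elim!: evenE)
  then show ?thesis unfolding I6_def using assms by auto
qed

lemma I6_top: "I6 l (4*l+1) = {x \<in> {1..4*l}. odd x}"
  unfolding I6_def by (auto elim!: oddE) presburger+

lemma card_even_atLeastAtMost: "card {x \<in> {1..2*n}. even x} = n"
proof -
  have "{x \<in> {1..2*n}. even x} = (\<lambda>j. 2*j) ` {1..n}" by (auto elim!: evenE)
  then show ?thesis by (simp add: card_image inj_on_def)
qed

lemma card_odd_atLeastAtMost: "card {x \<in> {1..2*n}. odd x} = n"
proof -
  have "{x \<in> {1..2*n}. odd x} = (\<lambda>j. 2*j + 1) ` {..<n}" by (auto elim!: oddE)
  then show ?thesis by (simp add: card_image inj_on_def)
qed

lemma card_I6:
  assumes "v \<in> {1..4*l+1}"
  shows "card (I6 l v) = (if even v then 1 else 2*l)"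
proof (cases "even v")
  case True
  then show ?thesis by (simp add: I6_even)
next
  case odd: False
  show ?thesis
  proof (cases "v = 4*l+1")
    case True
    then show ?thesis unfolding True I6_top using card_odd_atLeastAtMost[of "2*l"] by simp
  next
    case False
    have "v + 1 \<in> {x \<in> {1..4*l}. even x}" using odd False assms by auto presburger
    then have "card ({x \<in> {1..4*l}. even x} - {v + 1}) = 2*l - 1"
      using card_even_atLeastAtMost[of "2*l"] by simp
    moreover have "{x \<in> {1..4*l}. even x \<and> x \<noteq> v + 1} = {x \<in> {1..4*l}. even x} - {v + 1}" by auto
    moreover have "2*l \<ge> 1" using odd False assms by auto
    ultimately show ?thesis using odd False by (simp add: I6_odd)
  qed
qed

lemma Bset_I6_even:
  "even v \<Longrightarrow> Bset (I6 l) (4*l+1) v = {1..4*l+1} - {v - 1, v}"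
  by (auto simp: Bset_def I6_even)

lemma Bset_I6_odd:
  assumes "odd v" "v < 4*l+1"
  shows "Bset (I6 l) (4*l+1) v = insert (v + 1) ({x \<in> {1..4*l}. odd x} - {v})"
  using assms by (auto simp: Bset_def I6_odd)

lemma Bset_I6_top: "Bset (I6 l) (4*l+1) (4*l+1) = {x \<in> {1..4*l}. even x}"
  unfolding Bset_def I6_top by auto

lemma card_Bset_I6_odd:
  assumes "odd v" "v \<le> 4*l+1"
  shows "card (Bset (I6 l) (4*l+1) v) = 2*l"
proof (cases "v = 4*l+1")
  case True
  then show ?thesis unfolding True Bset_I6_top using card_even_atLeastAtMost[of "2*l"] by simp
next
  case False
  then have "v \<in> {x \<in> {1..4*l}. odd x}" using assms odd_pos[of v] by auto
  then have "card ({x \<in> {1..4*l}. odd x} - {v}) = 2*l - 1"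
    using card_odd_atLeastAtMost[of "2*l"] by simp
  moreover have "2*l \<ge> 1" using \<open>v \<in> {x \<in> {1..4*l}. odd x}\<close> by auto
  ultimately show ?thesis
    unfolding Bset_I6_odd[OF assms(1) le_neq_trans[OF assms(2) False]] using assms(1) by simp
qed

lemma twins_meet_Bset_I6:
  assumes "x \<in> {1..2*l}" "v \<in> {1..4*l+1}" "v \<noteq> 2*x"
  shows "twins x \<inter> Bset (I6 l) (4*l+1) v \<noteq> {}"
proof -
  consider "even v" | "v = 4*l+1" | "odd v" "v < 4*l+1" using assms(2) by fastforce
  then show ?thesis
  proof cases
    case 1
    then have "2*x \<in> Bset (I6 l) (4*l+1) v"
      unfolding Bset_I6_even[OF 1] using assms by auto presburger
    then show ?thesis by (auto simp: twins_def)
  next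
    case 2
    then have "2*x \<in> Bset (I6 l) (4*l+1) v" unfolding 2 Bset_I6_top using assms by simp
    then show ?thesis by (auto simp: twins_def)
  next
    case 3
    then have "2*x - 1 \<in> Bset (I6 l) (4*l+1) v \<or> 2*x \<in> Bset (I6 l) (4*l+1) v"
      unfolding Bset_I6_odd[OF 3] using assms by auto
    then show ?thesis by (auto simp: twins_def)
  qed
qed

(* The appended row takes the column c = v if v \<in> A_w; otherwise w, v < 4l+1, the row takes
   c = v+1 \<in> B_v, and the twin rows fall back on the odd columns. *)
lemma I6_odd_row_witness:
  assumes "w \<in> {1..4*l+1}" "v \<in> {1..4*l+1}" "odd w" "odd v" "v \<noteq> w"
  obtains c where "c \<in> insert w (I6 l w)" "c \<in> insert v (Bset (I6 l) (4*l+1) v)"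
    "\<forall>x \<in> {1..2*l}. twins x \<inter> (insert v (Bset (I6 l) (4*l+1) v) - {c}) \<noteq> {}"
proof (cases "v \<in> I6 l w")
  case True
  have "insert v (Bset (I6 l) (4*l+1) v) - {v} = Bset (I6 l) (4*l+1) v"
    by (auto simp: Bset_def)
  moreover have "v \<noteq> 2*x" for x using assms(4) by auto
  ultimately show ?thesis
    using that[of v] True twins_meet_Bset_I6[OF _ assms(2)] by auto
next
  case False
  have w_ne: "w \<noteq> 4*l+1"
  proof
    assume "w = 4*l+1"
    then have "v \<in> I6 l w" using assms(2,4,5) I6_top[of l] by auto
    with False show False ..
  qed
  have v_lt: "v < 4*l+1"
  proof -
    have "4*l+1 \<in> I6 l w" using I6_odd[OF assms(3) w_ne] by simp
    with False have "v \<noteq> 4*l+1" by blast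
    with assms(2) show ?thesis by simp
  qed
  have B: "insert v (Bset (I6 l) (4*l+1) v) = insert v (insert (v + 1) {x \<in> {1..4*l}. odd x})"
    using Bset_I6_odd[OF assms(4) v_lt] by auto
  have "v + 1 \<le> 4*l" using assms(4) v_lt by presburger
  then have "v + 1 \<in> I6 l w"
    unfolding I6_odd[OF assms(3) w_ne] using assms(4,5) by simp
  moreover have "v + 1 \<in> insert v (Bset (I6 l) (4*l+1) v)"
    unfolding B by simp
  moreover have "2*x - 1 \<in> insert v (Bset (I6 l) (4*l+1) v) - {v + 1}" if "x \<in> {1..2*l}" for x
    unfolding B using that assms(4) by auto presburger
  ultimately show ?thesis
    using that[of "v + 1"] by (fastforce simp: twins_def)
qed

(* The state of any run after the even vertices 2j, j in xs, have been picked in this order. *)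
definition remaining :: "nat \<Rightarrow> nat list \<Rightarrow> nat set" where
  "remaining l xs = {1..4*l+1} - (\<lambda>j. 2*j) ` set xs"

lemma remaining_Nil: "remaining l [] = {1..4*l+1}"
  by (simp add: remaining_def)

lemma remaining_snoc: "remaining l (xs @ [j]) = remaining l xs - {2*j}"
  by (auto simp: remaining_def)

lemma remaining_full: "set xs = {1..2*l} \<Longrightarrow> remaining l xs = {v \<in> {1..4*l+1}. odd v}"
  unfolding remaining_def by (auto elim!: evenE)

lemma remaining_not_decoded:
  assumes "distinct xs" "set xs \<subseteq> {1..2*l}" "v \<in> remaining l xs"
  shows "\<not> decoded (I6 l) (4*l+1) (map twins xs) v"
proof (rule not_decoded_if_full_rank)
  have "\<forall>x \<in> set xs. twins x \<inter> Bset (I6 l) (4*l+1) v \<noteq> {}"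
  proof (intro ballI twins_meet_Bset_I6)
    fix x assume "x \<in> set xs"
    then show "x \<in> {1..2*l}" "v \<in> {1..4*l+1}" "v \<noteq> 2*x"
      using assms(2,3) by (auto simp: remaining_def)
  qed
  then show "length (map twins xs)
      \<le> mcm (map twins xs) (length (map twins xs)) (Bset (I6 l) (4*l+1) v)"
    using mcm_map_disjoint_rows_ge[OF assms(1) disjoint_family_twins_on] by simp
qed

lemma decoded_after_all_twins:
  assumes "distinct xs" "set xs = {1..2*l}" "w \<in> remaining l xs" "v \<in> remaining l xs" "v \<noteq> w"
  shows "decoded (I6 l) (4*l+1) (map twins xs @ [insert w (I6 l w)]) v"
proof -
  let ?B = "Bset (I6 l) (4*l+1) v"
  have wv: "w \<in> {1..4*l+1}" "v \<in> {1..4*l+1}" "odd w" "odd v"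
    using assms(3,4) unfolding remaining_full[OF assms(2)] by auto
  obtain c where c: "c \<in> insert w (I6 l w)" "c \<in> insert v ?B"
    "\<forall>x \<in> {1..2*l}. twins x \<inter> (insert v ?B - {c}) \<noteq> {}"
    using I6_odd_row_witness[OF wv assms(5)] by blast
  have "length xs \<le> mcm (map twins xs) (length (map twins xs)) (insert v ?B - {c})"
    using mcm_map_disjoint_rows_ge[OF assms(1) disjoint_family_twins_on] c(3) assms(2) by simp
  then have "length xs + 1 \<le> mcm (map twins xs @ [insert w (I6 l w)])
      (length (map twins xs @ [insert w (I6 l w)])) (insert v ?B)"
    using mcm_snoc_ge[OF c(1,2), of "map twins xs"] by simp
  moreover have "length xs = 2*l"
    using distinct_card[OF assms(1)] assms(2) by simp
  moreover have "card ?B = 2*l"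
    using card_Bset_I6_odd wv by auto
  ultimately show ?thesis
    by (intro decoded_if_exceeds_card) simp
qed

lemma umcd_from_remaining_full:
  assumes "distinct xs" "set xs = {1..2*l}"
  shows "umcd_from (I6 l) (4*l+1) (remaining l xs) (map twins xs) k \<longleftrightarrow> k = 2*l+1"
proof -
  let ?N = "remaining l xs"
  have N: "?N = {v \<in> {1..4*l+1}. odd v}" by (rule remaining_full[OF assms(2)])
  have "?N \<noteq> {}" unfolding N by auto
  have "length xs = 2*l"
    using distinct_card[OF assms(1)] assms(2) by simp
  have minimal: "\<forall>i \<in> ?N. card (I6 l w) \<le> card (I6 l i)" if "w \<in> ?N" for w
    using that card_I6 unfolding N by simp
  have last_step: "umcd_from (I6 l) (4*l+1)
      (?N - {w} - {i \<in> ?N. decoded (I6 l) (4*l+1) (map twins xs @ [insert w (I6 l w)]) i})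
      (map twins xs @ [insert w (I6 l w)]) k \<longleftrightarrow> k = 2*l+1" if "w \<in> ?N" for w
  proof -
    have empty:
      "?N - {w} - {i \<in> ?N. decoded (I6 l) (4*l+1) (map twins xs @ [insert w (I6 l w)]) i} = {}"
      using decoded_after_all_twins[OF assms that] by blast
    show ?thesis unfolding empty umcd_from_empty_iff using \<open>length xs = 2*l\<close> by simp
  qed
  show ?thesis
    unfolding umcd_from_nonempty_iff[OF \<open>?N \<noteq> {}\<close>] using minimal last_step \<open>?N \<noteq> {}\<close> by auto
qed

lemma remaining_even_iff:
  "w \<in> remaining l xs \<and> even w \<longleftrightarrow> (\<exists>j \<in> {1..2*l} - set xs. w = 2*j)"
proof
  assume "w \<in> remaining l xs \<and> even w"
  then obtain j where "w = 2*j" "w \<in> {1..4*l+1}" "w \<notin> (\<lambda>j. 2*j) ` set xs"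
    by (auto simp: remaining_def elim!: evenE)
  then show "\<exists>j \<in> {1..2*l} - set xs. w = 2*j" by auto
qed (auto simp: remaining_def)

lemma remaining_minimal_iff_even:
  assumes "l \<ge> 1" "set xs \<subseteq> {1..2*l}" "set xs \<noteq> {1..2*l}" "w \<in> remaining l xs"
  shows "(\<forall>i \<in> remaining l xs. card (I6 l w) \<le> card (I6 l i)) \<longleftrightarrow> even w"
proof -
  have card_N: "card (I6 l v) = (if even v then 1 else 2*l)" if "v \<in> remaining l xs" for v
    using that card_I6 by (simp add: remaining_def)
  obtain j where "j \<in> {1..2*l} - set xs" using assms(2,3) by blast
  then have "2*j \<in> remaining l xs" using remaining_even_iff by blast
  show ?thesis
  proof
    assume "\<forall>i \<in> remaining l xs. card (I6 l w) \<le> card (I6 l i)"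
    then have "card (I6 l w) \<le> 1" using \<open>2*j \<in> remaining l xs\<close> card_N by fastforce
    then show "even w" using card_N[OF assms(4)] assms(1) by (auto split: if_splits)
  qed (use card_N assms(1,4) in simp)
qed

lemma remaining_after_twin_row:
  assumes "distinct xs" "set xs \<subseteq> {1..2*l}" "j \<in> {1..2*l} - set xs"
  shows "remaining l xs - {2*j} -
      {i \<in> remaining l xs. decoded (I6 l) (4*l+1) (map twins (xs @ [j])) i}
    = remaining l (xs @ [j])"
proof -
  have "distinct (xs @ [j])" "set (xs @ [j]) \<subseteq> {1..2*l}" using assms by auto
  then have "\<not> decoded (I6 l) (4*l+1) (map twins (xs @ [j])) i"
    if "i \<in> remaining l (xs @ [j])" for i
    using remaining_not_decoded that by blast
  then show ?thesis unfolding remaining_snoc by blast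
qed

lemma umcd_from_remaining_partial:
  assumes "l \<ge> 1" "distinct xs" "set xs \<subseteq> {1..2*l}" "set xs \<noteq> {1..2*l}"
  shows "umcd_from (I6 l) (4*l+1) (remaining l xs) (map twins xs) k \<longleftrightarrow>
    (\<exists>j \<in> {1..2*l} - set xs.
      umcd_from (I6 l) (4*l+1) (remaining l (xs @ [j])) (map twins (xs @ [j])) k)"
proof -
  let ?N = "remaining l xs"
  have "?N \<noteq> {}" using assms(3,4) remaining_even_iff by blast
  have "map twins xs @ [insert (2*j) (I6 l (2*j))] = map twins (xs @ [j])" for j
    by (simp add: insert_I6_even)
  then have pick: "w \<in> ?N \<and> (\<forall>i \<in> ?N. card (I6 l w) \<le> card (I6 l i)) \<and>
      umcd_from (I6 l) (4*l+1)
        (?N - {w} - {i \<in> ?N. decoded (I6 l) (4*l+1) (map twins xs @ [insert w (I6 l w)]) i})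
        (map twins xs @ [insert w (I6 l w)]) k \<longleftrightarrow>
    (\<exists>j \<in> {1..2*l} - set xs. w = 2*j \<and>
      umcd_from (I6 l) (4*l+1) (remaining l (xs @ [j])) (map twins (xs @ [j])) k)" for w
    using remaining_minimal_iff_even[OF assms(1,3,4)] remaining_even_iff[of w l xs]
      remaining_after_twin_row[OF assms(2,3)] by auto
  show ?thesis
    unfolding umcd_from_nonempty_iff[OF \<open>?N \<noteq> {}\<close>] Bex_def using pick by blast
qed

lemma umcd_from_remaining_iff:
  assumes "l \<ge> 1" "distinct xs" "set xs \<subseteq> {1..2*l}"
  shows "umcd_from (I6 l) (4*l+1) (remaining l xs) (map twins xs) k \<longleftrightarrow> k = 2*l+1"
  using assms(2,3)
proof (induction "2*l - length xs" arbitrary: xs rule: less_induct)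
  case less
  show ?case
  proof (cases "set xs = {1..2*l}")
    case True
    then show ?thesis using umcd_from_remaining_full less.prems(1) by blast
  next
    case False
    have "length xs = card (set xs)" using less.prems(1) by (simp add: distinct_card)
    also have "\<dots> < 2*l"
      using psubset_card_mono[of "{1..2*l}" "set xs"] False less.prems(2) by auto
    finally have "2*l - length (xs @ [j]) < 2*l - length xs" for j by simp
    then have "umcd_from (I6 l) (4*l+1) (remaining l (xs @ [j])) (map twins (xs @ [j])) k
        \<longleftrightarrow> k = 2*l+1" if "j \<in> {1..2*l} - set xs" for j
      using less.hyps[of "xs @ [j]"] less.prems that by auto
    moreover have "{1..2*l} - set xs \<noteq> {}" using False less.prems(2) by blast
    ultimately show ?thesis
      using umcd_from_remaining_partial[OF assms(1) less.prems False] by blast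
  qed
qed

theorem proposition8:
  fixes l :: nat
  assumes "l \<ge> 1"
  shows "{k. umcd_output (I6 l) (4*l+1) k} = {2*l+1}"
  using umcd_from_remaining_iff[OF assms, of "[]"]
  by (auto simp: umcd_output_def remaining_Nil)

end
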